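(* In the spectrum pricing game described in the context, let $(\psi_1,\ldots,\psi_n)$ be a symmetric Nash equilibrium. Then for every $i\in\{1,\ldots,n\}$, every point of the support of $\psi_i$ is a best response in state $i$. In particular, $L_i$ and $U_i$ are best responses in state $i$.
   Context: Spectrum pricing game. There are $l\ge 2$ primaries and $m$ secondaries, $1\le m<l$; there are $n$ channel states $1,\ldots,n$, plus state $0$ meaning "unavailable". Each primary owns one channel, which independently of the others is in state $i\in\{1,\ldots,n\}$ with probability $q_i>0$ and in state $0$ with probability $1-q$, where $q=\sum_{i=1}^n q_i\in(0,1)$. For each state $i\ge1$ there is a penalty function $g_i$, continuous and strictly increasing in the price, with inverse $f_i$, also continuous and strictly increasing. Quoting price $p$ for a channel in state $i$ means the channel offers penalty $g_i(p)$; equivalently, choosing penalty $x$ in state $i$ means charging price $f_i(x)$. Higher states are better: $g_i(p)>g_j(p)$ for all $p$ and $f_i(x)<f_j(x)$ for all $x$ whenever $i<j$. There is a transition cost $c>0$ and a maximum acceptable penalty $v$ with $g_1(c)<v$. We assume that all points used below lie in the common domain of the $f_i$, and that for all $j<k$ and all $x>y>g_j(c)$, $$\frac{f_j(y)-c}{f_k(y)-c}<\frac{f_j(x)-c}{f_k(x)-c}. \qquad (\ast)$$ Each primary knows only its own channel state. A primary whose channel is in state $j\ge1$ draws its penalty from a distribution function $\psi_j$, independently of everything else. A primary in state $0$ offers penalty $v+1$, which is equivalent to not offering its channel. If $Y$ channels are offered with penalty at most $v$, the $\min(Y,m)$ channels with the lowest penalties are sold, with ties broken uniformly at random. A primary selling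 at price $p$ earns $p-c$; otherwise it earns $0$. Strategies and equilibrium. A symmetric strategy profile is one in which every primary uses the same $(\psi_1,\ldots,\psi_n)$. Given such a profile, let $r(x)$ be the probability that a given primary's channel offered at penalty $x$ is sold, and set $\phi_j(x)=(f_j(x)-c)\,r(x)$, the expected profit of choosing penalty $x$ in state $j$. A symmetric Nash equilibrium (NE) is a symmetric profile in which no primary, in any state $j$, can increase its expected profit by unilaterally replacing $\psi_j$ with any other distribution. A penalty $x$ is a best response in state $j$ if $\phi_j(x)=\sup_{y\in\mathbb{R}}\phi_j(y)=:u_{j,\max}$. For a distribution function $\psi_i$, write $L_i=\inf\{x:\psi_i(x)>0\}$ and $U_i=\inf\{x:\psi_i(x)=1\}$. *)

theory Defs
  imports "HOL-Probability.Probability"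
begin

text \<open>States are 1..n; q j is the probability of state j;
  a primary in state 0 (probability 1 - sum q) offers penalty v+1.
  psi j is the (probability measure of the) penalty distribution used in state j.\<close>

definition qtot :: "nat \<Rightarrow> (nat \<Rightarrow> real) \<Rightarrow> real" where
  "qtot n q = (\<Sum>j=1..n. q j)"

definition rival_less :: "nat \<Rightarrow> (nat \<Rightarrow> real) \<Rightarrow> real \<Rightarrow> (nat \<Rightarrow> real measure) \<Rightarrow> real \<Rightarrow> real" where
  "rival_less n q v psi x =
     (\<Sum>j=1..n. q j * measure (psi j) {..<x}) + (1 - qtot n q) * (if v + 1 < x then 1 else 0)"

definition rival_eq :: "nat \<Rightarrow> (nat \<Rightarrow> real) \<Rightarrow> real \<Rightarrow> (nat \<Rightarrow> real measure) \<Rightarrow> real \<Rightarrow> real" where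
  "rival_eq n q v psi x =
     (\<Sum>j=1..n. q j * measure (psi j) {x}) + (1 - qtot n q) * (if x = v + 1 then 1 else 0)"

text \<open>Probability of being sold when a rivals are strictly cheaper and b rivals tie
  (ties broken uniformly at random, m channels sold).\<close>
definition win_prob :: "nat \<Rightarrow> nat \<Rightarrow> nat \<Rightarrow> real" where
  "win_prob m a b = (if a < m then min 1 ((real m - real a) / (real b + 1)) else 0)"

text \<open>r(x): probability that a given primary's channel offered at penalty x is sold,
  when the other l-1 primaries independently follow the symmetric profile psi
  (multinomial distribution of the numbers of cheaper / tied rivals).\<close>
definition sale_prob :: "nat \<Rightarrow> nat \<Rightarrow> nat \<Rightarrow> (nat \<Rightarrow> real) \<Rightarrow> real \<Rightarrow> (nat \<Rightarrow> real measure) \<Rightarrow> real \<Rightarrow> real" where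
  "sale_prob l m n q v psi x =
     (if x \<le> v then
        (let pl = rival_less n q v psi x; pe = rival_eq n q v psi x in
         (\<Sum>a\<le>l-1. \<Sum>b\<le>l-1-a.
            real ((l-1) choose a) * real ((l-1-a) choose b)
            * pl ^ a * pe ^ b * (1 - pl - pe) ^ (l-1-a-b) * win_prob m a b))
      else 0)"

definition profit :: "nat \<Rightarrow> nat \<Rightarrow> nat \<Rightarrow> (nat \<Rightarrow> real) \<Rightarrow> (nat \<Rightarrow> real \<Rightarrow> real) \<Rightarrow> real \<Rightarrow> real
                      \<Rightarrow> (nat \<Rightarrow> real measure) \<Rightarrow> nat \<Rightarrow> real \<Rightarrow> real" where
  "profit l m n q f c v psi j x = (f j x - c) * sale_prob l m n q v psi x"

text \<open>Symmetric Nash equilibrium: in each state j, psi j is a distribution on the reals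
  and no deviation to another distribution mu yields a larger expected profit.
  (Deviations with non-integrable profit have expected profit -infinity, since the
  profit is bounded above; they are never profitable.)\<close>
definition symmetric_NE :: "nat \<Rightarrow> nat \<Rightarrow> nat \<Rightarrow> (nat \<Rightarrow> real) \<Rightarrow> (nat \<Rightarrow> real \<Rightarrow> real) \<Rightarrow> real \<Rightarrow> real
                      \<Rightarrow> (nat \<Rightarrow> real measure) \<Rightarrow> bool" where
  "symmetric_NE l m n q f c v psi \<longleftrightarrow>
     (\<forall>j\<in>{1..n}. real_distribution (psi j)) \<and>
     (\<forall>j\<in>{1..n}. integrable (psi j) (profit l m n q f c v psi j) \<and>
        (\<forall>mu. real_distribution mu \<longrightarrow> integrable mu (profit l m n q f c v psi j) \<longrightarrow>
            (\<integral>x. profit l m n q f c v psi j x \<partial>mu) \<le> (\<integral>x. profit l m n q f c v psi j x \<partial>psi j)))"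

definition best_response :: "nat \<Rightarrow> nat \<Rightarrow> nat \<Rightarrow> (nat \<Rightarrow> real) \<Rightarrow> (nat \<Rightarrow> real \<Rightarrow> real) \<Rightarrow> real \<Rightarrow> real
                      \<Rightarrow> (nat \<Rightarrow> real measure) \<Rightarrow> nat \<Rightarrow> real \<Rightarrow> bool" where
  "best_response l m n q f c v psi j x \<longleftrightarrow>
     profit l m n q f c v psi j x = (SUP y. profit l m n q f c v psi j y)"

definition dist_support :: "real measure \<Rightarrow> real set" where
  "dist_support M = {x. \<forall>e>0. measure M {x - e<..<x + e} > 0}"

definition lowL :: "real measure \<Rightarrow> real" where
  "lowL M = Inf {x. cdf M x > 0}"

definition uppU :: "real measure \<Rightarrow> real" where
  "uppU M = Inf {x. cdf M x = 1}"

end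

theory Submission imports Defs begin

text \<open>Deviating to a point mass shows that every penalty earns at most the equilibrium payoff,
  so a state-\<open>i\<close> primary almost surely earns exactly that payoff. An atom of the equilibrium
  distributions would be strictly undercut: ties share the sales, so moving slightly below the atom
  recovers the whole tied probability at an almost unchanged price. Without atoms the payoff is
  continuous up to \<open>v\<close> and vanishes beyond it, hence upper semicontinuous; a point where it fell short
  of the maximum would have a neighbourhood of zero probability, so it cannot lie in the support.
  Finally \<open>L\<^sub>i\<close> and \<open>U\<^sub>i\<close> are finite support points because the support lies in
  \<open>[g\<^sub>i(c), v]\<close>.\<close>

definition expected_win :: "nat \<Rightarrow> nat \<Rightarrow> real \<Rightarrow> real \<Rightarrow> real" where
  "expected_win N m p e = (\<Sum>a\<le>N. \<Sum>b\<le>N-a. real (N choose a) * real ((N-a) choose b)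
      * p ^ a * e ^ b * (1 - p - e) ^ (N-a-b) * win_prob m a b)"

lemma tendsto_expected_win [tendsto_intros]:
  assumes "(P \<longlongrightarrow> p) F" "(Q \<longlongrightarrow> e) F"
  shows "((\<lambda>y. expected_win N m (P y) (Q y)) \<longlongrightarrow> expected_win N m p e) F"
  unfolding expected_win_def by (intro tendsto_intros assms)

lemma win_prob_nonneg: "0 \<le> win_prob m a b"
  by (simp add: win_prob_def)

lemma win_prob_le_untied: "win_prob m a b \<le> win_prob m a 0"
  by (simp add: win_prob_def)

lemma expected_win_nonneg:
  assumes "0 \<le> p" "0 \<le> e" "p + e \<le> 1"
  shows "0 \<le> expected_win N m p e"
  unfolding expected_win_def using assms
  by (intro sum_nonneg mult_nonneg_nonneg win_prob_nonneg zero_le_power) auto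

lemma expected_win_pos:
  assumes "0 \<le> p" "0 \<le> e" "p + e < 1" "1 \<le> m"
  shows "0 < expected_win N m p e"
  unfolding expected_win_def
proof (rule sum_pos2[where i=0])
  have "win_prob m 0 0 = 1" using assms by (simp add: win_prob_def)
  then show "0 < (\<Sum>b\<le>N-0. real (N choose 0) * real ((N-0) choose b)
      * p ^ 0 * e ^ b * (1 - p - e) ^ (N-0-b) * win_prob m 0 b)"
    using assms by (intro sum_pos2[where i=0]) (auto intro!: mult_nonneg_nonneg win_prob_nonneg)
qed (use assms in \<open>auto intro!: sum_nonneg mult_nonneg_nonneg win_prob_nonneg\<close>)

text \<open>Expanding \<open>(1 - p)\<^sup>N\<^sup>-\<^sup>a = (e + (1 - p - e))\<^sup>N\<^sup>-\<^sup>a\<close> writes the untied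
  winning probability over the same multinomial terms as the tied one.\<close>
lemma expected_win_untied_minus:
  "expected_win N m p 0 - expected_win N m p e =
     (\<Sum>a\<le>N. \<Sum>b\<le>N-a. real (N choose a) * real ((N-a) choose b)
        * p ^ a * e ^ b * (1 - p - e) ^ (N-a-b) * (win_prob m a 0 - win_prob m a b))"
proof -
  let ?C = "\<lambda>a b. real (N choose a) * real ((N-a) choose b) * p ^ a * e ^ b * (1 - p - e) ^ (N-a-b)"
  have "(\<Sum>b\<le>N-a. real (N choose a) * real ((N-a) choose b)
        * p ^ a * (0::real) ^ b * (1 - p - 0) ^ (N-a-b) * win_prob m a b)
      = (\<Sum>b\<le>N-a. if b = 0 then real (N choose a) * p ^ a * (1 - p) ^ (N-a) * win_prob m a 0 else 0)"
    for a by (intro sum.cong) auto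
  then have "expected_win N m p 0 = (\<Sum>a\<le>N. real (N choose a) * p ^ a * (1 - p) ^ (N-a) * win_prob m a 0)"
    unfolding expected_win_def by simp
  also have "\<dots> = (\<Sum>a\<le>N. \<Sum>b\<le>N-a. ?C a b * win_prob m a 0)"
  proof (intro sum.cong refl)
    fix a
    have "(1 - p) ^ (N-a) = (\<Sum>b\<le>N-a. real ((N-a) choose b) * e ^ b * (1 - p - e) ^ (N-a-b))"
      using binomial_ring[of e "1 - p - e" "N-a"] by simp
    then show "real (N choose a) * p ^ a * (1 - p) ^ (N-a) * win_prob m a 0
        = (\<Sum>b\<le>N-a. ?C a b * win_prob m a 0)"
      by (simp add: sum_distrib_left sum_distrib_right algebra_simps)
  qed
  finally show ?thesis
    unfolding expected_win_def by (simp add: sum_subtractf[symmetric] right_diff_distrib)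
qed

lemma expected_win_less_untied:
  assumes "0 \<le> p" "0 < e" "p + e \<le> 1" "1 \<le> m" "m \<le> N"
  shows "expected_win N m p e < expected_win N m p 0"
proof -
  let ?term = "\<lambda>a b. real (N choose a) * real ((N-a) choose b)
        * p ^ a * e ^ b * (1 - p - e) ^ (N-a-b) * (win_prob m a 0 - win_prob m a b)"
  have nonneg: "0 \<le> ?term a b" for a b
    using assms by (intro mult_nonneg_nonneg) (auto simp: win_prob_le_untied)
  \<comment> \<open>all \<open>N\<close> rivals tie: only \<open>m < N + 1\<close> of the \<open>N + 1\<close> tied channels are sold\<close>
  have "win_prob m 0 N < win_prob m 0 0"
    using assms by (simp add: win_prob_def)
  then have "0 < ?term 0 N"
    using assms by simp
  also have "\<dots> \<le> (\<Sum>b\<le>N-0. ?term 0 b)"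
    by (intro member_le_sum nonneg) auto
  also have "\<dots> \<le> (\<Sum>a\<le>N. \<Sum>b\<le>N-a. ?term a b)"
    by (intro member_le_sum sum_nonneg nonneg) auto
  also have "\<dots> = expected_win N m p 0 - expected_win N m p e"
    by (rule expected_win_untied_minus[symmetric])
  finally show ?thesis
    by simp
qed

lemma eventually_at_left_real_between:
  "b < (a::real) \<Longrightarrow> (\<And>y. b < y \<Longrightarrow> y < a \<Longrightarrow> P y) \<Longrightarrow> eventually P (at_left a)"
  by (rule eventually_mono[OF eventually_at_left_real[of b a]]) auto

lemma eventually_at_right_real_between:
  "a < (b::real) \<Longrightarrow> (\<And>y. a < y \<Longrightarrow> y < b \<Longrightarrow> P y) \<Longrightarrow> eventually P (at_right a)"
  by (rule eventually_mono[OF eventually_at_right_real[of a b]]) auto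

lemma (in finite_measure) measure_eq_0_if_AE_disjoint:
  assumes "AE x in M. P x" "S \<in> sets M" "\<And>x. x \<in> S \<Longrightarrow> \<not> P x"
  shows "measure M S = 0"
proof -
  have "AE x in M. x \<notin> S"
    using assms(1) by eventually_elim (use assms(3) in blast)
  then have "S \<in> null_sets M"
    using AE_iff_null_sets[OF assms(2)] by blast
  then show ?thesis
    by (auto dest: null_setsD1 simp: measure_def)
qed

lemma le_of_optimal_distribution:
  fixes u :: "real \<Rightarrow> real"
  assumes "u \<in> borel_measurable borel"
    and optimal: "\<And>\<mu>. real_distribution \<mu> \<Longrightarrow> integrable \<mu> u \<Longrightarrow> (\<integral>x. u x \<partial>\<mu>) \<le> E"
  shows "u y \<le> E"
proof -
  interpret dirac: prob_space "return borel y"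
    by (rule prob_space_return) simp
  have "real_distribution (return borel y)"
    by unfold_locales simp
  moreover have "integrable (return borel y) u"
    using assms(1) by (subst integrable_cong_AE[where g="\<lambda>_. u y"]) (auto simp: AE_return)
  moreover have "(\<integral>x. u x \<partial>return borel y) = u y"
    using assms(1) by (simp add: integral_return)
  ultimately show ?thesis
    using optimal by fastforce
qed

lemma (in prob_space) AE_eq_integral_of_le_integral:
  fixes u :: "'a \<Rightarrow> real"
  assumes "integrable M u" "\<And>y. u y \<le> (\<integral>x. u x \<partial>M)"
  shows "AE x in M. u x = (\<integral>x. u x \<partial>M)"
proof -
  let ?E = "\<integral>x. u x \<partial>M"
  have "(\<integral>x. ?E - u x \<partial>M) = 0"
    using assms(1) by (simp add: local.prob_space)
  then have "AE x in M. ?E - u x = 0"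
    using integral_nonneg_eq_0_iff_AE[of M "\<lambda>x. ?E - u x"] assms by simp
  then show ?thesis
    by eventually_elim simp
qed

context real_distribution
begin

lemma cdf_eq_lessThan_plus_singleton: "cdf M y = measure M {..<y} + measure M {y}"
proof -
  have "measure M ({..<y} \<union> {y}) = measure M {..<y} + measure M {y}"
    by (intro finite_measure_Union) auto
  moreover have "{..<y} \<union> {y} = {..y}"
    by auto
  ultimately show ?thesis
    unfolding cdf_def by simp
qed

lemma tendsto_measure_lessThan_left: "((\<lambda>y. measure M {..<y}) \<longlongrightarrow> measure M {..<x}) (at_left x)"
proof (rule tendsto_sandwich[where f="\<lambda>y. cdf M (2*y - x)" and h="\<lambda>y. measure M {..<x}"])
  have "filterlim (\<lambda>y. 2*y - x) (at_left x) (at_left x)"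
  proof -
    have "((\<lambda>y. 2*y - x) \<longlongrightarrow> 2*x - x) (at_left x)"
      by (intro tendsto_intros)
    moreover have "eventually (\<lambda>y. 2*y - x < x) (at_left x)"
      by (rule eventually_at_left_real_between[of "x - 1"]) auto
    ultimately show ?thesis
      by (auto simp: filterlim_at elim: eventually_mono)
  qed
  then show "((\<lambda>y. cdf M (2*y - x)) \<longlongrightarrow> measure M {..<x}) (at_left x)"
    using cdf_at_left[of x] by (rule filterlim_compose[rotated])
  show "eventually (\<lambda>y. cdf M (2*y - x) \<le> measure M {..<y}) (at_left x)"
    by (rule eventually_at_left_real_between[of "x - 1"])
      (auto simp: cdf_def intro!: finite_measure_mono)
  show "eventually (\<lambda>y. measure M {..<y} \<le> measure M {..<x}) (at_left x)"
    by (rule eventually_at_left_real_between[of "x - 1"]) (auto intro!: finite_measure_mono)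
qed simp

lemma tendsto_measure_lessThan_right: "((\<lambda>y. measure M {..<y}) \<longlongrightarrow> cdf M x) (at_right x)"
proof (rule tendsto_sandwich[where f="\<lambda>y. cdf M x" and h="\<lambda>y. cdf M y"])
  show "(cdf M \<longlongrightarrow> cdf M x) (at_right x)"
    using cdf_is_right_cont[of x] by (simp add: continuous_within)
  show "eventually (\<lambda>y. cdf M x \<le> measure M {..<y}) (at_right x)"
    by (rule eventually_at_right_real_between[of _ "x + 1"])
      (auto simp: cdf_def intro!: finite_measure_mono)
  show "eventually (\<lambda>y. measure M {..<y} \<le> cdf M y) (at_right x)"
    by (rule eventually_at_right_real_between[of _ "x + 1"])
      (auto simp: cdf_def intro!: finite_measure_mono)
qed simp

lemma tendsto_measure_singleton: "((\<lambda>y. measure M {y}) \<longlongrightarrow> 0) (at x)"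
proof (rule filterlim_split_at)
  have "((\<lambda>y. cdf M y - measure M {..<y}) \<longlongrightarrow> measure M {..<x} - measure M {..<x}) (at_left x)"
    by (intro tendsto_intros cdf_at_left tendsto_measure_lessThan_left)
  then show "((\<lambda>y. measure M {y}) \<longlongrightarrow> 0) (at_left x)"
    by (simp add: cdf_eq_lessThan_plus_singleton)
  have "((\<lambda>y. cdf M y - measure M {..<y}) \<longlongrightarrow> cdf M x - cdf M x) (at_right x)"
    using cdf_is_right_cont[of x]
    by (intro tendsto_intros tendsto_measure_lessThan_right) (simp add: continuous_within)
  then show "((\<lambda>y. measure M {y}) \<longlongrightarrow> 0) (at_right x)"
    by (simp add: cdf_eq_lessThan_plus_singleton)
qed

lemma dist_support_AE:
  assumes "x \<in> dist_support M" "AE y in M. P y" "\<forall>\<^sub>F y in at x. \<not> P y"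
  shows "P x"
proof (rule ccontr)
  assume "\<not> P x"
  obtain d where "0 < d" and d: "\<And>y. y \<noteq> x \<Longrightarrow> dist y x < d \<Longrightarrow> \<not> P y"
    using assms(3) unfolding eventually_at by blast
  have "\<not> P y" if "y \<in> {x - d<..<x + d}" for y
    using d[of y] \<open>\<not> P x\<close> that by (cases "y = x") (auto simp: dist_real_def abs_less_iff)
  then have "measure M {x - d<..<x + d} = 0"
    using assms(2) by (intro measure_eq_0_if_AE_disjoint) auto
  moreover have "0 < measure M {x - d<..<x + d}"
    using assms(1) \<open>0 < d\<close> unfolding dist_support_def by blast
  ultimately show False
    by simp
qed

text \<open>Both \<open>L\<close> and \<open>U\<close> are infima of such thresholds of the cdf.\<close>
lemma Inf_cdf_threshold_in_dist_support:
  assumes "S \<noteq> {}" "bdd_below S" and jump: "\<And>x s. x \<notin> S \<Longrightarrow> s \<in> S \<Longrightarrow> cdf M x < cdf M s"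
  shows "Inf S \<in> dist_support M"
  unfolding dist_support_def mem_Collect_eq
proof (intro allI impI)
  fix e :: real assume "0 < e"
  have "Inf S - e \<notin> S"
    using cInf_lower[OF _ assms(2), of "Inf S - e"] \<open>0 < e\<close> by force
  obtain s where "s \<in> S" "s < Inf S + e"
    using cInf_less_iff[OF assms(1,2)] \<open>0 < e\<close> by (metis less_add_same_cancel1)
  moreover have "Inf S \<le> s"
    using cInf_lower[OF \<open>s \<in> S\<close> assms(2)] .
  moreover have "0 < cdf M s - cdf M (Inf S - e)"
    using jump[OF \<open>Inf S - e \<notin> S\<close> \<open>s \<in> S\<close>] by simp
  moreover have "measure M {Inf S - e<..s} \<le> measure M {Inf S - e<..<Inf S + e}"
    using \<open>s < Inf S + e\<close> by (intro finite_measure_mono) auto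
  ultimately show "0 < measure M {Inf S - e<..<Inf S + e}"
    using \<open>0 < e\<close> cdf_diff_eq[of "Inf S - e" s] by simp
qed

lemma lowL_in_dist_support:
  assumes "cdf M b = 0"
  shows "lowL M \<in> dist_support M"
  unfolding lowL_def
proof (rule Inf_cdf_threshold_in_dist_support)
  have "\<forall>\<^sub>F x in at_top. 0 < cdf M x"
    by (rule order_tendstoD(1)[OF cdf_lim_at_top_prob]) simp
  then obtain x where "0 < cdf M x"
    by (meson eventually_at_top_linorder order_refl)
  then show "{x. 0 < cdf M x} \<noteq> {}"
    by blast
  show "bdd_below {x. 0 < cdf M x}"
  proof (rule bdd_belowI)
    fix x assume "x \<in> {x. 0 < cdf M x}"
    then show "b \<le> x"
      using assms cdf_nondecreasing[of x b] by (cases "x \<le> b") auto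
  qed
next
  fix x s assume "x \<notin> {x. 0 < cdf M x}" "s \<in> {x. 0 < cdf M x}"
  then show "cdf M x < cdf M s"
    using cdf_nonneg[of x] by simp
qed

lemma uppU_in_dist_support:
  assumes "cdf M t = 1"
  shows "uppU M \<in> dist_support M"
  unfolding uppU_def
proof (rule Inf_cdf_threshold_in_dist_support)
  show "{x. cdf M x = 1} \<noteq> {}"
    using assms by blast
  have "\<forall>\<^sub>F x in at_bot. cdf M x < 1"
    by (rule order_tendstoD(2)[OF cdf_lim_at_bot]) simp
  then obtain b where "cdf M b < 1"
    by (meson eventually_at_bot_linorder order_refl)
  show "bdd_below {x. cdf M x = 1}"
  proof (rule bdd_belowI)
    fix x assume "x \<in> {x. cdf M x = 1}"
    then show "b \<le> x"
      using \<open>cdf M b < 1\<close> cdf_nondecreasing[of x b] by (cases "x \<le> b") auto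
  qed
next
  fix x s assume "x \<notin> {x. cdf M x = 1}" "s \<in> {x. cdf M x = 1}"
  then show "cdf M x < cdf M s"
    using cdf_bounded_prob[of x] by simp
qed

end

locale symmetric_pricing_equilibrium =
  fixes l m n :: nat and q :: "nat \<Rightarrow> real" and f g :: "nat \<Rightarrow> real \<Rightarrow> real"
    and c v :: real and psi :: "nat \<Rightarrow> real measure"
  assumes m_pos: "1 \<le> m" and m_less_l: "m < l"
    and q_pos: "\<And>i. i \<in> {1..n} \<Longrightarrow> 0 < q i"
    and q_sum_pos: "0 < (\<Sum>i=1..n. q i)" and q_sum_less_1: "(\<Sum>i=1..n. q i) < 1"
    and f_cont: "\<And>i. i \<in> {1..n} \<Longrightarrow> continuous_on UNIV (f i)"
    and f_mono: "\<And>i. i \<in> {1..n} \<Longrightarrow> strict_mono (f i)"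
    and f_g: "\<And>i p. i \<in> {1..n} \<Longrightarrow> f i (g i p) = p"
    and f_order: "\<And>i j x. i \<in> {1..n} \<Longrightarrow> j \<in> {1..n} \<Longrightarrow> i < j \<Longrightarrow> f i x < f j x"
    and g_1_c_less_v: "g 1 c < v"
    and NE: "symmetric_NE l m n q f c v psi"
begin

abbreviation payoff :: "nat \<Rightarrow> real \<Rightarrow> real" where
  "payoff \<equiv> profit l m n q f c v psi"

definition eq_payoff :: "nat \<Rightarrow> real" where
  "eq_payoff j = (\<integral>x. payoff j x \<partial>psi j)"

text \<open>The state-0 primaries never undercut or tie a penalty \<open>y \<le> v\<close>, so they drop out here.\<close>
definition cheaper :: "real \<Rightarrow> real" where
  "cheaper y = (\<Sum>j=1..n. q j * measure (psi j) {..<y})"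

definition tied :: "real \<Rightarrow> real" where
  "tied y = (\<Sum>j=1..n. q j * measure (psi j) {y})"

lemma psi_distribution: "j \<in> {1..n} \<Longrightarrow> real_distribution (psi j)"
  using NE unfolding symmetric_NE_def by blast

lemma payoff_le_eq_payoff:
  assumes "j \<in> {1..n}"
  shows "payoff j y \<le> eq_payoff j"
proof (rule le_of_optimal_distribution[where u="payoff j"])
  interpret real_distribution "psi j" using psi_distribution[OF assms] .
  have "integrable (psi j) (payoff j)"
    using NE assms unfolding symmetric_NE_def by blast
  then show "payoff j \<in> borel_measurable borel"
    by (simp cong: measurable_cong_sets)
qed (use NE assms in \<open>auto simp: symmetric_NE_def eq_payoff_def\<close>)

lemma AE_payoff_eq:
  assumes "j \<in> {1..n}"
  shows "AE x in psi j. payoff j x = eq_payoff j"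
proof -
  interpret real_distribution "psi j" using psi_distribution[OF assms] .
  show ?thesis
    unfolding eq_payoff_def
    using NE assms payoff_le_eq_payoff[OF assms]
    by (intro AE_eq_integral_of_le_integral) (auto simp: symmetric_NE_def eq_payoff_def)
qed

lemma payoff_eq:
  "y \<le> v \<Longrightarrow> payoff j y = (f j y - c) * expected_win (l - 1) m (cheaper y) (tied y)"
  unfolding profit_def sale_prob_def expected_win_def rival_less_def rival_eq_def cheaper_def
    tied_def Let_def by simp

lemma payoff_above: "v < y \<Longrightarrow> payoff j y = 0"
  unfolding profit_def sale_prob_def by simp

lemma cheaper_nonneg: "0 \<le> cheaper y"
  unfolding cheaper_def using q_pos by (intro sum_nonneg mult_nonneg_nonneg) (auto intro: less_imp_le)

lemma tied_nonneg: "0 \<le> tied y"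
  unfolding tied_def using q_pos by (intro sum_nonneg mult_nonneg_nonneg) (auto intro: less_imp_le)

lemma cheaper_plus_tied: "cheaper y + tied y = (\<Sum>j=1..n. q j * cdf (psi j) y)"
  unfolding cheaper_def tied_def sum.distrib[symmetric]
  by (intro sum.cong refl)
    (simp add: real_distribution.cdf_eq_lessThan_plus_singleton[OF psi_distribution] algebra_simps)

lemma cheaper_plus_tied_less_1: "cheaper y + tied y < 1"
proof -
  have "cheaper y + tied y \<le> (\<Sum>j=1..n. q j)"
    unfolding cheaper_plus_tied
    using q_pos real_distribution.cdf_bounded_prob[OF psi_distribution]
    by (intro sum_mono) (simp add: mult_left_le less_imp_le)
  then show ?thesis
    using q_sum_less_1 by simp
qed

lemma expected_win_cheaper_tied_nonneg: "0 \<le> expected_win (l - 1) m (cheaper y) (tied y)"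
  using expected_win_nonneg cheaper_nonneg tied_nonneg cheaper_plus_tied_less_1
  by (simp add: less_imp_le)

lemma c_less_f_v:
  assumes "j \<in> {1..n}"
  shows "c < f j v"
proof -
  have one: "1 \<in> {1..n}"
    using q_sum_pos by (cases n) auto
  have "c = f 1 (g 1 c)"
    using f_g[OF one] by simp
  also have "\<dots> < f 1 v"
    using f_mono[OF one] g_1_c_less_v by (simp add: strict_mono_less)
  also have "\<dots> \<le> f j v"
    using f_order[OF one assms] assms by (cases "j = 1") (auto intro: less_imp_le)
  finally show ?thesis .
qed

lemma eq_payoff_pos:
  assumes "j \<in> {1..n}"
  shows "0 < eq_payoff j"
proof -
  have "0 < expected_win (l - 1) m (cheaper v) (tied v)"
    using expected_win_pos cheaper_nonneg tied_nonneg cheaper_plus_tied_less_1 m_pos by blast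
  then have "0 < payoff j v"
    using payoff_eq[of v j] c_less_f_v[OF assms] by simp
  then show ?thesis
    using payoff_le_eq_payoff[OF assms, of v] by simp
qed

lemma payoff_eq_eq_payoffD:
  assumes j: "j \<in> {1..n}" and "payoff j x = eq_payoff j"
  shows "x \<le> v" and "c < f j x"
proof -
  show "x \<le> v"
    using assms payoff_above eq_payoff_pos[OF j] by (metis less_irrefl not_le)
  then have "payoff j x = (f j x - c) * expected_win (l - 1) m (cheaper x) (tied x)"
    by (rule payoff_eq)
  then show "c < f j x"
    using assms eq_payoff_pos[OF j] expected_win_cheaper_tied_nonneg[of x]
    by (metis diff_le_0_iff_le mult_nonpos_nonneg not_le order_less_irrefl)
qed

lemma f_tendsto:
  "j \<in> {1..n} \<Longrightarrow> (f j \<longlongrightarrow> f j x) (at x within S)"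
  using f_cont by (metis continuous_on_eq_continuous_within continuous_within UNIV_I
      tendsto_within_subset subset_UNIV)

lemma tendsto_cheaper_left: "(cheaper \<longlongrightarrow> cheaper x) (at_left x)"
  unfolding cheaper_def
  by (intro tendsto_intros real_distribution.tendsto_measure_lessThan_left[OF psi_distribution]) auto

lemma tendsto_cheaper_right: "(cheaper \<longlongrightarrow> cheaper x + tied x) (at_right x)"
  unfolding cheaper_plus_tied unfolding cheaper_def
  by (intro tendsto_intros real_distribution.tendsto_measure_lessThan_right[OF psi_distribution]) auto

lemma tendsto_tied: "(tied \<longlongrightarrow> 0) (at x)"
  unfolding tied_def
  using real_distribution.tendsto_measure_singleton[OF psi_distribution]
  by (auto intro!: tendsto_null_sum tendsto_mult_right_zero)

lemma payoff_tendsto_left: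
  assumes "j \<in> {1..n}"
  shows "((\<lambda>y. (f j y - c) * expected_win (l - 1) m (cheaper y) (tied y))
           \<longlongrightarrow> (f j x - c) * expected_win (l - 1) m (cheaper x) 0) (at_left x)"
  by (intro tendsto_intros f_tendsto[OF assms] tendsto_cheaper_left
      tendsto_mono[OF at_le tendsto_tied]) auto

lemma measure_singleton_eq_0:
  assumes j: "j \<in> {1..n}"
  shows "measure (psi j) {x} = 0"
proof (rule ccontr)
  interpret real_distribution "psi j" using psi_distribution[OF j] .
  let ?win = "\<lambda>y e. (f j y - c) * expected_win (l - 1) m (cheaper y) e"
  assume "measure (psi j) {x} \<noteq> 0"
  then have atom: "0 < measure (psi j) {x}"
    using measure_nonneg[of "psi j" "{x}"] by linarith
  then have at_x: "payoff j x = eq_payoff j"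
    using measure_eq_0_if_AE_disjoint[OF AE_payoff_eq[OF j], of "{x}"] by auto
  note x = payoff_eq_eq_payoffD[OF j at_x]
  have "q j * measure (psi j) {x} \<le> tied x"
    unfolding tied_def using j q_pos
    by (intro member_le_sum mult_nonneg_nonneg) (auto intro: less_imp_le)
  then have "0 < tied x"
    using atom q_pos[OF j] by (smt (verit) mult_pos_pos)
  then have "expected_win (l - 1) m (cheaper x) (tied x) < expected_win (l - 1) m (cheaper x) 0"
    using cheaper_nonneg cheaper_plus_tied_less_1 m_pos m_less_l
    by (intro expected_win_less_untied) (auto intro: less_imp_le)
  then have "eq_payoff j < ?win x 0"
    using at_x payoff_eq[OF x(1)] x(2) by (metis diff_gt_0_iff_gt mult_strict_left_mono)
  \<comment> \<open>undercutting the atom slightly is strictly better than the equilibrium payoff\<close>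
  then have "\<forall>\<^sub>F y in at_left x. eq_payoff j < ?win y (tied y)"
    by (rule order_tendstoD(1)[OF payoff_tendsto_left[OF j]])
  moreover have "\<forall>\<^sub>F y in at_left x. y < x"
    by (rule eventually_at_left_real_between[of "x - 1"]) auto
  ultimately have "\<forall>\<^sub>F y in at_left x. False"
  proof eventually_elim
    case (elim y)
    then have "payoff j y = ?win y (tied y)"
      using x(1) by (simp add: payoff_eq)
    with elim show False
      using payoff_le_eq_payoff[OF j, of y] by simp
  qed
  then show False
    by (simp add: trivial_limit_at_left_real)
qed

lemma tied_eq_0: "tied x = 0"
  unfolding tied_def by (simp add: measure_singleton_eq_0)

lemma payoff_eventually_less:
  assumes j: "j \<in> {1..n}" and less: "payoff j x < eq_payoff j"
  shows "\<forall>\<^sub>F y in at x. payoff j y < eq_payoff j"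
proof (cases "x \<le> v")
  case True
  let ?h = "\<lambda>y. (f j y - c) * expected_win (l - 1) m (cheaper y) 0"
  have "(cheaper \<longlongrightarrow> cheaper x) (at x)"
    using tendsto_cheaper_left tendsto_cheaper_right[of x] by (simp add: tied_eq_0 filterlim_split_at)
  then have "(?h \<longlongrightarrow> ?h x) (at x)"
    by (intro tendsto_intros f_tendsto[OF j])
  moreover have "?h x < eq_payoff j"
    using less payoff_eq[OF True] by (simp add: tied_eq_0)
  ultimately have "\<forall>\<^sub>F y in at x. ?h y < eq_payoff j"
    by (rule order_tendstoD(2))
  then show ?thesis
  proof eventually_elim
    case (elim y)
    then show ?case
      using eq_payoff_pos[OF j] by (cases "y \<le> v") (auto simp: payoff_eq payoff_above tied_eq_0)
  qed
next
  case False
  then have "\<forall>\<^sub>F y in at x. v < y"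
    by (intro order_tendstoD(1)[OF tendsto_ident_at]) simp
  then show ?thesis
    by eventually_elim (use payoff_above eq_payoff_pos[OF j] in simp)
qed

lemma payoff_eq_on_support:
  assumes j: "j \<in> {1..n}" and x: "x \<in> dist_support (psi j)"
  shows "payoff j x = eq_payoff j"
proof (rule ccontr)
  assume ne: "payoff j x \<noteq> eq_payoff j"
  then have "payoff j x < eq_payoff j"
    using payoff_le_eq_payoff[OF j] by (simp add: order_less_le)
  then have "\<forall>\<^sub>F y in at x. payoff j y \<noteq> eq_payoff j"
    by (rule eventually_mono[OF payoff_eventually_less[OF j]]) simp
  with ne show False
    using real_distribution.dist_support_AE[OF psi_distribution[OF j] x AE_payoff_eq[OF j]] by blast
qed

lemma best_response_if_eq_payoff:
  assumes j: "j \<in> {1..n}" and "payoff j x = eq_payoff j"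
  shows "best_response l m n q f c v psi j x"
proof -
  have "(SUP y. payoff j y) = eq_payoff j"
    using assms payoff_le_eq_payoff[OF j] by (intro cSup_eq_maximum) (auto intro: range_eqI[of _ _ x])
  with assms(2) show ?thesis
    unfolding best_response_def by simp
qed

lemma cdf_eq_0_below:
  assumes j: "j \<in> {1..n}" and "y < g j c"
  shows "cdf (psi j) y = 0"
proof -
  interpret real_distribution "psi j" using psi_distribution[OF j] .
  have "f j z < c" if "z \<le> y" for z
    using f_mono[OF j] f_g[OF j] that assms(2) by (metis order_le_less_trans strict_mono_less)
  then show ?thesis
    unfolding cdf_def using payoff_eq_eq_payoffD(2)[OF j]
    by (intro measure_eq_0_if_AE_disjoint[OF AE_payoff_eq[OF j]]) force+
qed

lemma cdf_v_eq_1: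
  assumes j: "j \<in> {1..n}"
  shows "cdf (psi j) v = 1"
proof -
  interpret real_distribution "psi j" using psi_distribution[OF j] .
  have "measure (psi j) {v<..} = 0"
    using payoff_eq_eq_payoffD(1)[OF j]
    by (intro measure_eq_0_if_AE_disjoint[OF AE_payoff_eq[OF j]]) force+
  moreover have "UNIV - {v<..} = {..v}"
    by auto
  ultimately show ?thesis
    using prob_compl[of "{v<..}"] unfolding cdf_def by simp
qed

theorem support_best_responses:
  assumes j: "j \<in> {1..n}"
  shows "\<forall>x\<in>dist_support (psi j). best_response l m n q f c v psi j x"
    and "best_response l m n q f c v psi j (lowL (psi j))"
    and "best_response l m n q f c v psi j (uppU (psi j))"
proof -
  interpret real_distribution "psi j" using psi_distribution[OF j] .
  have "lowL (psi j) \<in> dist_support (psi j)" "uppU (psi j) \<in> dist_support (psi j)"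
    using lowL_in_dist_support[OF cdf_eq_0_below[OF j, of "g j c - 1"]]
      uppU_in_dist_support[OF cdf_v_eq_1[OF j]] by auto
  then show "\<forall>x\<in>dist_support (psi j). best_response l m n q f c v psi j x"
    and "best_response l m n q f c v psi j (lowL (psi j))"
    and "best_response l m n q f c v psi j (uppU (psi j))"
    using best_response_if_eq_payoff[OF j] payoff_eq_on_support[OF j] by auto
qed

end

theorem mainTheorem5:
  fixes l m n :: nat and q :: "nat \<Rightarrow> real" and f g :: "nat \<Rightarrow> real \<Rightarrow> real"
    and c v :: real and psi :: "nat \<Rightarrow> real measure"
  assumes l2: "l \<ge> 2" and m1: "1 \<le> m" and ml: "m < l"
    and qpos: "\<forall>i\<in>{1..n}. q i > 0"
    and qtot: "0 < (\<Sum>i=1..n. q i)" "(\<Sum>i=1..n. q i) < 1"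
    and g_cont: "\<forall>i\<in>{1..n}. continuous_on UNIV (g i)"
    and g_mono: "\<forall>i\<in>{1..n}. strict_mono (g i)"
    and f_cont: "\<forall>i\<in>{1..n}. continuous_on UNIV (f i)"
    and f_mono: "\<forall>i\<in>{1..n}. strict_mono (f i)"
    and fg_inv: "\<forall>i\<in>{1..n}. \<forall>p. f i (g i p) = p"
    and gf_inv: "\<forall>i\<in>{1..n}. \<forall>x. g i (f i x) = x"
    and g_order: "\<forall>i\<in>{1..n}. \<forall>j\<in>{1..n}. i < j \<longrightarrow> (\<forall>p. g i p > g j p)"
    and f_order: "\<forall>i\<in>{1..n}. \<forall>j\<in>{1..n}. i < j \<longrightarrow> (\<forall>x. f i x < f j x)"
    and cpos: "c > 0"
    and vbound: "g 1 c < v"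
    and star: "\<forall>j\<in>{1..n}. \<forall>k\<in>{1..n}. j < k \<longrightarrow> (\<forall>x y. x > y \<and> y > g j c \<longrightarrow>
                 (f j y - c) / (f k y - c) < (f j x - c) / (f k x - c))"
    and NE: "symmetric_NE l m n q f c v psi"
  shows "\<forall>i\<in>{1..n}.
           (\<forall>x\<in>dist_support (psi i). best_response l m n q f c v psi i x)
           \<and> best_response l m n q f c v psi i (lowL (psi i))
           \<and> best_response l m n q f c v psi i (uppU (psi i))"
proof -
  interpret symmetric_pricing_equilibrium l m n q f g c v psi
    using m1 ml qpos qtot f_cont f_mono fg_inv f_order vbound NE by unfold_locales auto
  show ?thesis
    using support_best_responses by blast
qed

end
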